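(* Let $A\in\mathbb{R}^{m\times n}$ have singular value decomposition $A=U\Sigma V^\top$ (with $U\in\mathbb{R}^{m\times m}$, $V\in\mathbb{R}^{n\times n}$ orthogonal), let $r=\operatorname{rank}(A)$, let $\lambda:=(\sigma_1^2(A),\ldots,\sigma_r^2(A),0,\ldots,0)^\top\in\mathbb{R}^m$, let $1\le s\le r$, and let $$H_s:=\frac{U\operatorname{diag}\big(e_{s-1}(\lambda_{-1}),\ldots,e_{s-1}(\lambda_{-m})\big)U^\top}{e_s(\lambda)}.$$ Then for every $z\in\operatorname{Range}(A^\top)$, $$z^\top A^\top H_s A z\ \ge\ \frac{\sigma_{\min}^2(A)}{\sigma_s^2(A)+\cdots+\sigma_{\min}^2(A)}\,\|z\|_2^2 .$$
   Context: $\sigma_1(A)\ge\cdots\ge\sigma_r(A)=:\sigma_{\min}(A)>0$ are the nonzero singular values of $A$, so $\sigma_s^2(A)+\cdots+\sigma_{\min}^2(A)=\sum_{j=s}^r\sigma_j^2(A)$. For $\xi\in\mathbb{R}^p$ and $1\le\ell\le p$, $e_\ell(\xi):=\sum_{1\le i_1<\cdots<i_\ell\le p}\xi_{i_1}\cdots\xi_{i_\ell}$, and $e_0(\xi):=1$. For $i\in[m]$, $\lambda_{-i}\in\mathbb{R}^{m-1}$ is $\lambda$ with its $i$-th entry removed. $\operatorname{Range}(A^\top)$ is the column space of $A^\top$. *)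

theory Defs
  imports "Jordan_Normal_Form.Matrix"
begin

definition esym :: "nat set \<Rightarrow> (nat \<Rightarrow> real) \<Rightarrow> nat \<Rightarrow> real" where
  "esym I xi l = (\<Sum>S\<in>{S. S \<subseteq> I \<and> card S = l}. \<Prod>i\<in>S. xi i)"

end

(* In the coordinates w = V^T z the quadratic form z^T A^T H_s A z is
   sum_i e_{s-1}(lambda_{-i}) lambda_i w_i^2 / e_s(lambda), and z in Range(A^T) forces w_i = 0
   wherever sigma_i = 0, so ||z||^2 = sum_{i<=r} w_i^2 and it suffices to bound every coefficient.
   With T = sigma_s^2 + ... + sigma_min^2, split e_s(lambda) = lambda_i e_{s-1}(lambda_{-i}) + e_s(lambda_{-i}).
   Every nonzero term of e_s(lambda_{-i}) contains a factor lambda_j with j in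
   J = {s,...,r} - {max i s}, and the lambda-sum over J is at most T - sigma_min^2, so
   e_s(lambda_{-i}) <= e_{s-1}(lambda_{-i}) (T - sigma_min^2).  Together with sigma_min^2 <= lambda_i
   this gives sigma_min^2 e_s(lambda) <= lambda_i e_{s-1}(lambda_{-i}) T. *)

theory Submission imports Defs "Jordan_Normal_Form.Determinant" begin

lemma finite_esym_index_sets: "finite I \<Longrightarrow> finite {T. T \<subseteq> I \<and> card T = l}"
  by (auto intro: finite_subset[of _ "Pow I"])

lemma esym_nonneg: "(\<And>i. i \<in> I \<Longrightarrow> lam i \<ge> 0) \<Longrightarrow> esym I lam l \<ge> 0"
  unfolding esym_def by (auto intro!: sum_nonneg prod_nonneg)

lemma esym_pos:
  assumes "finite I" "\<And>i. i \<in> I \<Longrightarrow> lam i \<ge> 0"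
    and "K \<subseteq> I" "card K = l" "\<And>i. i \<in> K \<Longrightarrow> lam i > 0"
  shows "esym I lam l > 0"
  unfolding esym_def
proof (rule sum_pos2[where i = K])
  show "0 < prod lam K" using assms(5) by (rule prod_pos)
qed (use assms finite_esym_index_sets in \<open>auto intro!: prod_nonneg\<close>)

lemma esym_remove:
  assumes fin: "finite I" and i: "i \<in> I" and l: "1 \<le> l"
  shows "esym I lam l = lam i * esym (I - {i}) lam (l - 1) + esym (I - {i}) lam l"
proof -
  define Ts where "Ts = {T. T \<subseteq> I \<and> card T = l}"
  define Rs where "Rs = {R. R \<subseteq> I - {i} \<and> card R = l - 1}"
  have fin_Ts: "finite Ts" unfolding Ts_def using fin by (rule finite_esym_index_sets)
  have with_i: "{T \<in> Ts. i \<in> T} = insert i ` Rs"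
  proof (intro equalityI subsetI)
    fix T assume T: "T \<in> {T \<in> Ts. i \<in> T}"
    then have "finite T" using fin unfolding Ts_def by (auto intro: finite_subset)
    with T have "T = insert i (T - {i})" "T - {i} \<in> Rs" unfolding Ts_def Rs_def by auto
    then show "T \<in> insert i ` Rs" by blast
  next
    fix T assume "T \<in> insert i ` Rs"
    then obtain R where R: "R \<subseteq> I - {i}" "card R = l - 1" "T = insert i R"
      unfolding Rs_def by auto
    then have "finite R" "i \<notin> R" using fin by (auto intro: finite_subset)
    then show "T \<in> {T \<in> Ts. i \<in> T}" using R i l unfolding Ts_def by auto
  qed
  have "esym I lam l = (\<Sum>T\<in>{T \<in> Ts. i \<in> T}. prod lam T) + (\<Sum>T\<in>{T \<in> Ts. i \<notin> T}. prod lam T)"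
    unfolding esym_def Ts_def[symmetric] using fin_Ts
    by (subst sum.union_disjoint[symmetric]) (auto intro: sum.cong)
  also have "{T \<in> Ts. i \<notin> T} = {T. T \<subseteq> I - {i} \<and> card T = l}" unfolding Ts_def by auto
  also have "(\<Sum>T\<in>{T \<in> Ts. i \<in> T}. prod lam T) = (\<Sum>R\<in>Rs. prod lam (insert i R))"
    unfolding with_i by (subst sum.reindex) (auto simp: Rs_def inj_on_def insert_ident)
  also have "\<dots> = (\<Sum>R\<in>Rs. lam i * prod lam R)"
    using fin by (intro sum.cong refl, subst prod.insert) (auto simp: Rs_def intro: finite_subset)
  finally show ?thesis unfolding esym_def Rs_def by (simp add: sum_distrib_left)
qed

text \<open>Every nonzero term of \<open>e\<^sub>l(I)\<close> contains a factor from \<open>J\<close>; removing one such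
  factor maps these terms injectively to the terms of \<open>e\<^bsub>l-1\<^esub>(I) \<cdot> \<Sum>\<^sub>J lam\<close>.\<close>

lemma esym_le_esym_mult_sum:
  assumes fin: "finite I" and nonneg: "\<And>i. i \<in> I \<Longrightarrow> lam i \<ge> 0" and J: "J \<subseteq> I"
    and few: "card {i \<in> I - J. lam i \<noteq> 0} < l"
  shows "esym I lam l \<le> esym I lam (l - 1) * sum lam J"
proof -
  define Tp where "Tp = {T. T \<subseteq> I \<and> card T = l \<and> (\<forall>t\<in>T. lam t \<noteq> 0)}"
  define Rs where "Rs = {R. R \<subseteq> I \<and> card R = l - 1}"
  define f where "f T = (SOME j. j \<in> T \<inter> J)" for T
  define g where "g T = (T - {f T}, f T)" for T
  have fin_J: "finite J" using J fin by (rule finite_subset)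
  have fin_T: "finite T" if "T \<subseteq> I" for T using that fin by (rule finite_subset)
  have f: "f T \<in> T \<inter> J" if T: "T \<in> Tp" for T
  proof -
    have "T \<inter> J \<noteq> {}"
    proof
      assume "T \<inter> J = {}"
      then have "T \<subseteq> {i \<in> I - J. lam i \<noteq> 0}" using T unfolding Tp_def by auto
      then have "card T \<le> card {i \<in> I - J. lam i \<noteq> 0}" by (rule card_mono[rotated]) (use fin in simp)
      then have "card T < l" using few by linarith
      then show False using T unfolding Tp_def by simp
    qed
    then show ?thesis unfolding f_def by (metis ex_in_conv someI_ex)
  qed
  have "esym I lam l = (\<Sum>T\<in>Tp. prod lam T)"
    unfolding esym_def Tp_def
  proof (rule sum.mono_neutral_right)
    show "finite {T. T \<subseteq> I \<and> card T = l}" using fin by (rule finite_esym_index_sets)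
    show "\<forall>T\<in>{T. T \<subseteq> I \<and> card T = l} - {T. T \<subseteq> I \<and> card T = l \<and> (\<forall>t\<in>T. lam t \<noteq> 0)}.
        prod lam T = 0" using fin_T by auto
  qed auto
  also have "\<dots> = (\<Sum>T\<in>Tp. prod lam (fst (g T)) * lam (snd (g T)))"
  proof (rule sum.cong[OF refl])
    fix T assume T: "T \<in> Tp"
    then have "finite T" unfolding Tp_def using fin_T by blast
    then show "prod lam T = prod lam (fst (g T)) * lam (snd (g T))"
      using f[OF T] by (simp add: g_def prod.remove mult.commute)
  qed
  also have "\<dots> = (\<Sum>p\<in>g ` Tp. prod lam (fst p) * lam (snd p))"
  proof (rule sum.reindex[symmetric, unfolded comp_def], rule inj_onI)
    fix T T' assume T: "T \<in> Tp" and T': "T' \<in> Tp" and "g T = g T'"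
    then have "T - {f T} = T' - {f T'} \<and> f T = f T'" unfolding g_def prod.inject by blast
    then show "T = T'" using f[OF T] f[OF T'] by (metis IntD1 insert_Diff)
  qed
  also have "\<dots> \<le> (\<Sum>p\<in>Rs \<times> J. prod lam (fst p) * lam (snd p))"
  proof (rule sum_mono2)
    show "finite (Rs \<times> J)" unfolding Rs_def using fin fin_J by (simp add: finite_esym_index_sets)
    show "g ` Tp \<subseteq> Rs \<times> J"
    proof (rule image_subsetI)
      fix T assume T: "T \<in> Tp"
      have "card (T - {f T}) = l - 1" using f[OF T] T unfolding Tp_def by (simp add: card_Diff_singleton)
      moreover have "T - {f T} \<subseteq> I" using T unfolding Tp_def by blast
      ultimately show "g T \<in> Rs \<times> J" using f[OF T] unfolding g_def Rs_def by simp
    qed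
    show "0 \<le> prod lam (fst p) * lam (snd p)" if "p \<in> Rs \<times> J - g ` Tp" for p
      using that nonneg J unfolding Rs_def by (auto intro!: mult_nonneg_nonneg prod_nonneg)
  qed
  also have "\<dots> = esym I lam (l - 1) * sum lam J"
    unfolding esym_def Rs_def[symmetric] sum_product
    by (simp add: sum.cartesian_product split_beta)
  finally show ?thesis .
qed

lemma esym_remove_le:
  fixes lam :: "nat \<Rightarrow> real"
  assumes nonneg: "\<And>j. lam j \<ge> 0" and zero: "\<And>j. r \<le> j \<Longrightarrow> lam j = 0"
    and mono: "\<And>i j. i \<le> j \<Longrightarrow> j < r \<Longrightarrow> lam j \<le> lam i"
    and "r \<le> m" "1 \<le> s" "s \<le> r" "i < r"
  shows "esym ({0..<m} - {i}) lam s
    \<le> esym ({0..<m} - {i}) lam (s - 1) * ((\<Sum>j = s - 1..<r. lam j) - lam (r - 1))"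
proof -
  define k where "k = max i (s - 1)"
  define J where "J = {s - 1..<r} - {k}"
  have k: "k \<in> {s - 1..<r}" unfolding k_def using assms by auto
  have "{j \<in> {0..<m} - {i} - J. lam j \<noteq> 0} \<subseteq> ({0..<s - 1} \<union> {k}) - {i}"
  proof
    fix j assume j: "j \<in> {j \<in> {0..<m} - {i} - J. lam j \<noteq> 0}"
    then have "j < r" using zero not_less by blast
    with j show "j \<in> ({0..<s - 1} \<union> {k}) - {i}" unfolding J_def by auto
  qed
  then have "card {j \<in> {0..<m} - {i} - J. lam j \<noteq> 0} \<le> card (({0..<s - 1} \<union> {k}) - {i})"
    by (intro card_mono) simp_all
  also have "\<dots> = s - 1"
  proof -
    have "i \<in> {0..<s - 1} \<union> {k}" unfolding k_def by auto
    moreover have "card ({0..<s - 1} \<union> {k}) = s" using k assms by simp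
    ultimately show ?thesis by (simp add: card_Diff_singleton)
  qed
  finally have few: "card {j \<in> {0..<m} - {i} - J. lam j \<noteq> 0} < s"
    using assms by linarith
  have "J \<subseteq> {0..<m} - {i}" unfolding J_def k_def using assms by auto
  then have "esym ({0..<m} - {i}) lam s \<le> esym ({0..<m} - {i}) lam (s - 1) * sum lam J"
    using few nonneg by (intro esym_le_esym_mult_sum) auto
  also have "\<dots> \<le> esym ({0..<m} - {i}) lam (s - 1) * ((\<Sum>j = s - 1..<r. lam j) - lam (r - 1))"
  proof (rule mult_left_mono)
    have "sum lam J = (\<Sum>j = s - 1..<r. lam j) - lam k"
      unfolding J_def using k by (simp add: sum_diff1)
    then show "sum lam J \<le> (\<Sum>j = s - 1..<r. lam j) - lam (r - 1)"
      using mono[of k "r - 1"] k by fastforce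
  qed (use nonneg esym_nonneg in blast)
  finally show ?thesis .
qed

lemma esym_ratio_lower_bound:
  fixes lam :: "nat \<Rightarrow> real"
  assumes pos: "\<And>j. j < r \<Longrightarrow> lam j > 0" and zero: "\<And>j. r \<le> j \<Longrightarrow> lam j = 0"
    and mono: "\<And>i j. i \<le> j \<Longrightarrow> j < r \<Longrightarrow> lam j \<le> lam i"
    and "r \<le> m" "1 \<le> s" "s \<le> r" "i < r"
  shows "lam (r - 1) / (\<Sum>j = s - 1..<r. lam j)
    \<le> esym ({0..<m} - {i}) lam (s - 1) * lam i / esym {0..<m} lam s"
proof -
  define E where "E = esym {0..<m} lam s"
  define d where "d = esym ({0..<m} - {i}) lam (s - 1)"
  define T where "T = (\<Sum>j = s - 1..<r. lam j)"
  define lm where "lm = lam (r - 1)"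
  have nonneg: "lam j \<ge> 0" for j using pos zero by (metis less_le not_le order_refl)
  have d: "d \<ge> 0" unfolding d_def using nonneg by (rule esym_nonneg)
  have lm_pos: "lm > 0" unfolding lm_def using pos assms by simp
  have lm_le: "lm \<le> lam i" unfolding lm_def using mono assms by simp
  have T_ge: "lm \<le> T" unfolding T_def lm_def using assms nonneg by (intro member_le_sum) auto
  have E_pos: "E > 0" unfolding E_def using assms pos nonneg by (intro esym_pos[of _ _ "{0..<s}"]) auto
  have "lm * E = lm * lam i * d + lm * esym ({0..<m} - {i}) lam s"
    unfolding E_def d_def using assms by (subst esym_remove[of _ i]) (auto simp: algebra_simps)
  also have "\<dots> \<le> lm * lam i * d + lam i * (d * (T - lm))"
  proof -
    have "esym ({0..<m} - {i}) lam s \<le> d * (T - lm)"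
      unfolding d_def T_def lm_def using nonneg zero mono assms(4-7) by (rule esym_remove_le)
    then have "lm * esym ({0..<m} - {i}) lam s \<le> lam i * (d * (T - lm))"
      using lm_le nonneg esym_nonneg by (intro mult_mono) auto
    then show ?thesis by simp
  qed
  also have "\<dots> = d * lam i * T" by (simp add: algebra_simps)
  finally show ?thesis
    using E_pos lm_pos T_ge unfolding E_def[symmetric] d_def[symmetric] T_def[symmetric] lm_def[symmetric]
    by (simp add: divide_simps mult.commute)
qed

lemma smult_mat_mult_vec:
  fixes M :: "'a :: comm_ring mat"
  assumes "M \<in> carrier_mat k l" "v \<in> carrier_vec l"
  shows "(c \<cdot>\<^sub>m M) *\<^sub>v v = c \<cdot>\<^sub>v (M *\<^sub>v v)"
  using assms by (intro eq_vecI) (auto simp: scalar_prod_def sum_distrib_left ac_simps)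

lemma scalar_prod_transpose_mult_mult_vec:
  fixes A B :: "'a :: comm_ring mat"
  assumes A: "A \<in> carrier_mat m n" and B: "B \<in> carrier_mat m m" and z: "z \<in> carrier_vec n"
  shows "z \<bullet> (transpose_mat A * B * A *\<^sub>v z) = (A *\<^sub>v z) \<bullet> (B *\<^sub>v (A *\<^sub>v z))"
proof -
  have "transpose_mat A * B * A *\<^sub>v z = transpose_mat A *\<^sub>v (B *\<^sub>v (A *\<^sub>v z))"
    using A B z by (simp add: assoc_mult_mat_vec[of _ n m _ n])
  then show ?thesis
    using transpose_vec_mult_scalar[of "transpose_mat A" n m "B *\<^sub>v (A *\<^sub>v z)" z] A B z by simp
qed

lemma orthogonal_conj_quadratic_form:
  fixes U D :: "'a :: comm_ring_1 mat"
  assumes U: "U \<in> carrier_mat m m" and U_orth: "transpose_mat U * U = 1\<^sub>m m"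
    and D: "D \<in> carrier_mat m m" and u: "u \<in> carrier_vec m"
  shows "(U *\<^sub>v u) \<bullet> ((U * D * transpose_mat U) *\<^sub>v (U *\<^sub>v u)) = u \<bullet> (D *\<^sub>v u)"
proof -
  have "transpose_mat U *\<^sub>v (U *\<^sub>v u) = u"
    using assoc_mult_mat_vec[of "transpose_mat U" m m U m u] U u U_orth by simp
  then show ?thesis
    using scalar_prod_transpose_mult_mult_vec[of "transpose_mat U" m m D "U *\<^sub>v u"] U D u by simp
qed

lemma mult_mat_vec_diagonal:
  fixes S :: "'a :: comm_ring_1 mat"
  assumes S: "S \<in> carrier_mat m n"
    and S_entries: "\<And>i j. i < m \<Longrightarrow> j < n \<Longrightarrow> S $$ (i, j) = (if i = j then sigma i else 0)"
    and w: "w \<in> carrier_vec n" and i: "i < m"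
  shows "(S *\<^sub>v w) $ i = (if i < n then sigma i * w $ i else 0)"
proof -
  have "(S *\<^sub>v w) $ i = (\<Sum>j = 0..<n. S $$ (i, j) * w $ j)"
    using S w i by (simp add: scalar_prod_def)
  also have "\<dots> = (\<Sum>j = 0..<n. if i = j then sigma i * w $ j else 0)"
    using i by (intro sum.cong) (simp_all add: S_entries)
  finally show ?thesis by simp
qed

lemma scalar_prod_mat_diag:
  fixes u :: "'a :: comm_ring_1 vec"
  assumes u: "u \<in> carrier_vec m"
  shows "u \<bullet> (mat_diag m d *\<^sub>v u) = (\<Sum>i = 0..<m. d i * (u $ i)\<^sup>2)"
proof -
  have "(mat_diag m d *\<^sub>v u) $ i = d i * u $ i" if "i < m" for i
    using mult_mat_vec_diagonal[of "mat_diag m d" m m d u i] u that by (simp add: mat_diag_def)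
  then show ?thesis
    unfolding scalar_prod_def by (intro sum.cong) (auto simp: power2_eq_square mat_diag_def)
qed

locale svd =
  fixes A U V S :: "real mat" and sigma :: "nat \<Rightarrow> real" and m n :: nat
  assumes U: "U \<in> carrier_mat m m" and U_orth: "transpose_mat U * U = 1\<^sub>m m"
    and V: "V \<in> carrier_mat n n" and V_orth: "transpose_mat V * V = 1\<^sub>m n"
    and S: "S \<in> carrier_mat m n"
    and S_entries: "\<And>i j. i < m \<Longrightarrow> j < n \<Longrightarrow> S $$ (i, j) = (if i = j then sigma i else 0)"
    and A_eq: "A = U * S * transpose_mat V"
begin

lemma A_carrier: "A \<in> carrier_mat m n"
  using U S V unfolding A_eq by simp

lemma scalar_prod_transpose_V:
  assumes z: "z \<in> carrier_vec n"
  shows "(transpose_mat V *\<^sub>v z) \<bullet> (transpose_mat V *\<^sub>v z) = z \<bullet> z"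
proof -
  have "V *\<^sub>v (transpose_mat V *\<^sub>v z) = (V * transpose_mat V) *\<^sub>v z"
    using V z by (intro assoc_mult_mat_vec[symmetric]) auto
  also have "V * transpose_mat V = 1\<^sub>m n"
    using V V_orth by (intro mat_mult_left_right_inverse[of "transpose_mat V" n V]) simp_all
  finally have "V *\<^sub>v (transpose_mat V *\<^sub>v z) = z" using z by simp
  then show ?thesis
    using transpose_vec_mult_scalar[OF V, of "transpose_mat V *\<^sub>v z" z] V z by simp
qed

lemma transpose_V_mult_range_transpose:
  assumes y: "y \<in> carrier_vec m" and j: "j < n"
  shows "(transpose_mat V *\<^sub>v (transpose_mat A *\<^sub>v y)) $ j
    = (if j < m then sigma j * (transpose_mat U *\<^sub>v y) $ j else 0)"
proof -
  define x where "x = transpose_mat S *\<^sub>v (transpose_mat U *\<^sub>v y)"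
  have x: "x \<in> carrier_vec n" unfolding x_def using S U y by simp
  have "transpose_mat A = V * transpose_mat (U * S)"
    using transpose_mult[of "U * S" m n "transpose_mat V" n] U S V unfolding A_eq by simp
  also have "transpose_mat (U * S) = transpose_mat S * transpose_mat U"
    using U S by (rule transpose_mult)
  finally have "transpose_mat A = V * (transpose_mat S * transpose_mat U)" .
  then have "transpose_mat V *\<^sub>v (transpose_mat A *\<^sub>v y) = transpose_mat V *\<^sub>v (V *\<^sub>v x)"
    unfolding x_def using U S V y
    by (simp add: assoc_mult_mat_vec[of V n n _ m] assoc_mult_mat_vec[of "transpose_mat S" n m _ m])
  also have "\<dots> = (transpose_mat V * V) *\<^sub>v x"
    using V x by (intro assoc_mult_mat_vec[symmetric]) auto
  finally have "transpose_mat V *\<^sub>v (transpose_mat A *\<^sub>v y) = x" using V_orth x by simp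
  moreover have "transpose_mat S $$ (i, k) = (if i = k then sigma i else 0)" if "i < n" "k < m" for i k
    using S S_entries that by auto
  ultimately show ?thesis
    unfolding x_def using mult_mat_vec_diagonal[of "transpose_mat S" n m sigma] U S y j by simp
qed

lemma quadratic_form_conj_diag:
  assumes z: "z \<in> carrier_vec n"
  shows "z \<bullet> (transpose_mat A * (c \<cdot>\<^sub>m (U * mat_diag m d * transpose_mat U)) * A *\<^sub>v z)
    = c * (\<Sum>i = 0..<min m n. d i * (sigma i)\<^sup>2 * ((transpose_mat V *\<^sub>v z) $ i)\<^sup>2)"
proof -
  define M where "M = U * mat_diag m d * transpose_mat U"
  define w where "w = transpose_mat V *\<^sub>v z"
  define u where "u = S *\<^sub>v w"
  have M: "M \<in> carrier_mat m m" unfolding M_def using U by (intro mult_carrier_mat[of _ m m]) auto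
  have w: "w \<in> carrier_vec n" and u: "u \<in> carrier_vec m" unfolding u_def w_def using S V z by simp_all
  have "A *\<^sub>v z = (U * S) *\<^sub>v w"
    unfolding A_eq w_def using U S V z by (intro assoc_mult_mat_vec) auto
  also have "\<dots> = U *\<^sub>v u"
    unfolding u_def using U S w by (intro assoc_mult_mat_vec) auto
  finally have Az: "A *\<^sub>v z = U *\<^sub>v u" .
  have "z \<bullet> (transpose_mat A * (c \<cdot>\<^sub>m M) * A *\<^sub>v z) = (U *\<^sub>v u) \<bullet> ((c \<cdot>\<^sub>m M) *\<^sub>v (U *\<^sub>v u))"
    using scalar_prod_transpose_mult_mult_vec[OF A_carrier _ z, of "c \<cdot>\<^sub>m M"] M unfolding Az by simp
  also have "\<dots> = c * (u \<bullet> (mat_diag m d *\<^sub>v u))"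
    using smult_mat_mult_vec[OF M, of "U *\<^sub>v u" c] orthogonal_conj_quadratic_form[OF U U_orth _ u, of "mat_diag m d"]
      M U u unfolding M_def by simp
  also have "u \<bullet> (mat_diag m d *\<^sub>v u) = (\<Sum>i = 0..<m. d i * (u $ i)\<^sup>2)"
    by (rule scalar_prod_mat_diag[OF u])
  also have "\<dots> = (\<Sum>i = 0..<m. if i < n then d i * (sigma i)\<^sup>2 * (w $ i)\<^sup>2 else 0)"
    unfolding u_def by (intro sum.cong) (auto simp: mult_mat_vec_diagonal[OF S S_entries w] power_mult_distrib)
  also have "\<dots> = (\<Sum>i = 0..<min m n. d i * (sigma i)\<^sup>2 * (w $ i)\<^sup>2)"
    by (rule sum.mono_neutral_cong_right) auto
  finally show ?thesis unfolding M_def w_def .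
qed

lemma quadratic_form_ge_on_range_transpose:
  assumes coeff: "\<And>i. i < min m n \<Longrightarrow> sigma i \<noteq> 0 \<Longrightarrow> c \<le> e * d i * (sigma i)\<^sup>2"
    and y: "y \<in> carrier_vec m" and zy: "z = transpose_mat A *\<^sub>v y"
  shows "c * (z \<bullet> z) \<le> z \<bullet> (transpose_mat A * (e \<cdot>\<^sub>m (U * mat_diag m d * transpose_mat U)) * A *\<^sub>v z)"
proof -
  define w where "w = transpose_mat V *\<^sub>v z"
  have z: "z \<in> carrier_vec n" unfolding zy using A_carrier y by simp
  have w_zero: "w $ j = 0" if "j < n" "j < m \<Longrightarrow> sigma j = 0" for j
    using transpose_V_mult_range_transpose[OF y \<open>j < n\<close>] that unfolding w_def zy by auto
  have "w \<in> carrier_vec n" unfolding w_def using V z by simp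
  then have "w \<bullet> w = (\<Sum>j = 0..<n. (w $ j)\<^sup>2)" by (simp add: scalar_prod_def power2_eq_square)
  then have "c * (z \<bullet> z) = (\<Sum>j = 0..<n. c * (w $ j)\<^sup>2)"
    using scalar_prod_transpose_V[OF z] unfolding w_def by (simp add: sum_distrib_left)
  also have "\<dots> \<le> (\<Sum>j = 0..<n. if j < m then e * d j * (sigma j)\<^sup>2 * (w $ j)\<^sup>2 else 0)"
  proof (rule sum_mono)
    fix j assume "j \<in> {0..<n}"
    then show "c * (w $ j)\<^sup>2 \<le> (if j < m then e * d j * (sigma j)\<^sup>2 * (w $ j)\<^sup>2 else 0)"
      using coeff[of j] w_zero[of j] by (cases "j < m \<and> sigma j \<noteq> 0") (auto intro: mult_right_mono)
  qed
  also have "\<dots> = (\<Sum>j = 0..<min m n. e * d j * (sigma j)\<^sup>2 * (w $ j)\<^sup>2)"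
    by (rule sum.mono_neutral_cong_right) auto
  also have "\<dots> = z \<bullet> (transpose_mat A * (e \<cdot>\<^sub>m (U * mat_diag m d * transpose_mat U)) * A *\<^sub>v z)"
    unfolding quadratic_form_conj_diag[OF z] w_def sum_distrib_left by (simp add: ac_simps)
  finally show ?thesis .
qed

end

theorem lemma2p3:
  fixes A U V S :: "real mat" and sigma :: "nat \<Rightarrow> real" and m n r s :: nat
  assumes A: "A \<in> carrier_mat m n"
    and U: "U \<in> carrier_mat m m" and U_orth: "transpose_mat U * U = 1\<^sub>m m"
    and V: "V \<in> carrier_mat n n" and V_orth: "transpose_mat V * V = 1\<^sub>m n"
    and S: "S \<in> carrier_mat m n"
    and S_entries: "\<And>i j. i < m \<Longrightarrow> j < n \<Longrightarrow> S $$ (i, j) = (if i = j then sigma i else 0)"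
    and svd: "A = U * S * transpose_mat V"
    and r_le: "r \<le> min m n"
    and sigma_pos: "\<And>i. i < r \<Longrightarrow> sigma i > 0"
    and sigma_zero: "\<And>i. r \<le> i \<Longrightarrow> i < min m n \<Longrightarrow> sigma i = 0"
    and sigma_mono: "\<And>i j. i \<le> j \<Longrightarrow> j < r \<Longrightarrow> sigma j \<le> sigma i"
    and s: "1 \<le> s" "s \<le> r"
  shows "let lam = (\<lambda>i. if i < r then (sigma i)\<^sup>2 else 0);
             H = (1 / esym {0..<m} lam s) \<cdot>\<^sub>m
                   (U * mat_diag m (\<lambda>i. esym ({0..<m} - {i}) lam (s - 1)) * transpose_mat U)
         in \<forall>z \<in> carrier_vec n. (\<exists>y \<in> carrier_vec m. z = transpose_mat A *\<^sub>v y) \<longrightarrow>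
              z \<bullet> (transpose_mat A * H * A *\<^sub>v z)
                \<ge> (sigma (r - 1))\<^sup>2 / (\<Sum>j = s - 1..<r. (sigma j)\<^sup>2) * (z \<bullet> z)"
proof -
  interpret svd A U V S sigma m n
    using U U_orth V V_orth S S_entries svd by unfold_locales
  define lam where "lam = (\<lambda>i. if i < r then (sigma i)\<^sup>2 else (0::real))"
  define E where "E = esym {0..<m} lam s"
  define d where "d = (\<lambda>i. esym ({0..<m} - {i}) lam (s - 1))"
  have lam_pos: "lam j > 0" if "j < r" for j unfolding lam_def using sigma_pos[OF that] that by simp
  have lam_mono: "lam j \<le> lam i" if "i \<le> j" "j < r" for i j
    unfolding lam_def using that sigma_mono[OF that] sigma_pos[of j] by (simp add: power_mono)
  have lam_sum: "(\<Sum>j = s - 1..<r. lam j) = (\<Sum>j = s - 1..<r. (sigma j)\<^sup>2)"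
    unfolding lam_def by (intro sum.cong) auto
  have coeff: "(sigma (r - 1))\<^sup>2 / (\<Sum>j = s - 1..<r. (sigma j)\<^sup>2) \<le> 1 / E * d i * (sigma i)\<^sup>2"
    if "i < min m n" "sigma i \<noteq> 0" for i
  proof -
    have i: "i < r" using that sigma_zero not_less by blast
    then have "lam (r - 1) / (\<Sum>j = s - 1..<r. lam j) \<le> d i * lam i / E"
      unfolding d_def E_def using lam_pos lam_mono r_le s
      by (intro esym_ratio_lower_bound) (auto simp: lam_def)
    then show ?thesis using i s unfolding lam_sum by (simp add: lam_def)
  qed
  show ?thesis
    unfolding Let_def lam_def[symmetric] E_def[symmetric] d_def[symmetric]
    using quadratic_form_ge_on_range_transpose[OF coeff] by auto
qed

end
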